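(* Let $K$ be a finite group, $N\trianglelefteq K$, and $H=\Delta_K(1\times N)=\{(gn,g):g\in K,n\in N\}\le K\times K$. Then every cohomology class in $H^2(H;\mathbb{T})$ contains a cocycle $\psi$ satisfying, for all $g,k\in K$ and $n,m\in N$, $$\psi((gn,g),(km,k))=\overline{\beta^{\psi}_{(k,k)}((n,1))}\,\psi((n^k,1),(m,1))\,\psi((g,g),(k,k)).$$
   Context: $n^k=k^{-1}nk$. For $\psi\in Z^2(X;\mathbb{T})$ on a group $X$, $\beta^\psi_x(y)=\psi(x,x^{-1}yx)\,\overline{\psi(y,x)}$. *)

theory Defs
  imports Complex_Main "HOL-Algebra.Algebra"
begin

definition cocycle2 :: "('g, 'b) monoid_scheme \<Rightarrow> ('g \<Rightarrow> 'g \<Rightarrow> complex) \<Rightarrow> bool" where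
  "cocycle2 G \<psi> \<longleftrightarrow>
     (\<forall>x\<in>carrier G. \<forall>y\<in>carrier G. cmod (\<psi> x y) = 1) \<and>
     (\<forall>x\<in>carrier G. \<forall>y\<in>carrier G. \<forall>z\<in>carrier G.
        \<psi> x y * \<psi> (x \<otimes>\<^bsub>G\<^esub> y) z = \<psi> x (y \<otimes>\<^bsub>G\<^esub> z) * \<psi> y z)"

definition cohomologous :: "('g, 'b) monoid_scheme \<Rightarrow> ('g \<Rightarrow> 'g \<Rightarrow> complex) \<Rightarrow> ('g \<Rightarrow> 'g \<Rightarrow> complex) \<Rightarrow> bool" where
  "cohomologous G \<omega> \<psi> \<longleftrightarrow>
     (\<exists>\<mu>. (\<forall>x\<in>carrier G. cmod (\<mu> x) = 1) \<and>
          (\<forall>x\<in>carrier G. \<forall>y\<in>carrier G.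
             \<psi> x y = \<omega> x y * \<mu> x * \<mu> y / \<mu> (x \<otimes>\<^bsub>G\<^esub> y)))"

definition beta :: "('g, 'b) monoid_scheme \<Rightarrow> ('g \<Rightarrow> 'g \<Rightarrow> complex) \<Rightarrow> 'g \<Rightarrow> 'g \<Rightarrow> complex" where
  "beta G \<psi> x y = \<psi> x (inv\<^bsub>G\<^esub> x \<otimes>\<^bsub>G\<^esub> y \<otimes>\<^bsub>G\<^esub> x) * cnj (\<psi> y x)"

end

theory Submission
  imports Defs
begin

text \<open>
  Every element of \<open>H = \<Delta>\<^sub>K(1 \<times> N)\<close> factors uniquely as \<open>(g, g)(n, 1)\<close>. Twisting \<open>\<omega>\<close> by
  the coboundary of \<open>\<mu>((g, g)(n, 1)) = \<omega>((g, g), (n, 1)) / \<omega>(1, 1)\<^sup>2\<close> gives a cohomologous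
  cocycle \<open>\<psi>\<close> with \<open>\<psi>((g, g), (n, 1)) = 1\<close>. For such \<open>\<psi>\<close>, the cocycle identity applied to
  the triples \<open>((g, g), (n, 1), (km, k))\<close>, \<open>((g, g), (k, k), (n\<^sup>k m, 1))\<close>,
  \<open>((n, 1), (k, k), (m, 1))\<close> and \<open>((k, k), (n\<^sup>k, 1), (m, 1))\<close> gives
  \<open>\<psi>((gn, g), (km, k)) = \<psi>((n, 1), (k, k)) \<psi>((n\<^sup>k, 1), (m, 1)) \<psi>((g, g), (k, k))\<close>,
  and \<open>\<beta>\<^sup>\<psi>_(k, k)((n, 1))\<close> is just the conjugate of \<open>\<psi>((n, 1), (k, k))\<close>.
\<close>

lemma cocycle2_assoc:
  assumes "cocycle2 G \<psi>" "x \<in> carrier G" "y \<in> carrier G" "z \<in> carrier G"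
  shows "\<psi> x y * \<psi> (x \<otimes>\<^bsub>G\<^esub> y) z = \<psi> x (y \<otimes>\<^bsub>G\<^esub> z) * \<psi> y z"
  using assms unfolding cocycle2_def by blast

lemma cocycle2_nonzero:
  assumes "cocycle2 G \<psi>" "x \<in> carrier G" "y \<in> carrier G"
  shows "\<psi> x y \<noteq> 0"
  using assms unfolding cocycle2_def by force

lemma cocycle2_right_one:
  fixes G (structure)
  assumes "monoid G" "cocycle2 G \<psi>" "x \<in> carrier G"
  shows "\<psi> x \<one> = \<psi> \<one> \<one>"
proof -
  interpret monoid G by fact
  have "\<psi> x \<one> * \<psi> x \<one> = \<psi> x \<one> * \<psi> \<one> \<one>"
    using cocycle2_assoc[OF assms(2,3) one_closed one_closed] assms(3) by simp
  then show ?thesis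
    using cocycle2_nonzero[OF assms(2,3) one_closed] by simp
qed

lemma cocycle2_left_one:
  fixes G (structure)
  assumes "monoid G" "cocycle2 G \<psi>" "x \<in> carrier G"
  shows "\<psi> \<one> x = \<psi> \<one> \<one>"
proof -
  interpret monoid G by fact
  have "\<psi> \<one> \<one> * \<psi> \<one> x = \<psi> \<one> x * \<psi> \<one> x"
    using cocycle2_assoc[OF assms(2) one_closed one_closed assms(3)] assms(3) by simp
  then show ?thesis
    using cocycle2_nonzero[OF assms(2) one_closed assms(3)] by simp
qed

lemma cocycle2_coboundary_mult:
  fixes G (structure)
  assumes "monoid G" "cocycle2 G \<omega>" and \<mu>: "\<forall>x\<in>carrier G. cmod (\<mu> x) = 1"
  shows "cocycle2 G (\<lambda>x y. \<omega> x y * \<mu> x * \<mu> y / \<mu> (x \<otimes> y))"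
proof -
  interpret monoid G by fact
  have nonzero: "\<mu> x \<noteq> 0" if "x \<in> carrier G" for x
    using \<mu> that by force
  show ?thesis
    unfolding cocycle2_def
  proof (intro conjI ballI)
    fix x y assume "x \<in> carrier G" "y \<in> carrier G"
    then show "cmod (\<omega> x y * \<mu> x * \<mu> y / \<mu> (x \<otimes> y)) = 1"
      using assms(2) \<mu> unfolding cocycle2_def by (simp add: norm_mult norm_divide)
  next
    fix x y z assume xyz: "x \<in> carrier G" "y \<in> carrier G" "z \<in> carrier G"
    then show "\<omega> x y * \<mu> x * \<mu> y / \<mu> (x \<otimes> y) * (\<omega> (x \<otimes> y) z * \<mu> (x \<otimes> y) * \<mu> z / \<mu> (x \<otimes> y \<otimes> z)) =
        \<omega> x (y \<otimes> z) * \<mu> x * \<mu> (y \<otimes> z) / \<mu> (x \<otimes> (y \<otimes> z)) * (\<omega> y z * \<mu> y * \<mu> z / \<mu> (y \<otimes> z))"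
      using cocycle2_assoc[OF assms(2) xyz] nonzero by (simp add: m_assoc field_simps)
  qed
qed

lemma cocycle2_cohomologous_trivial_on_factorization:
  fixes G (structure)
  assumes "group G" "cocycle2 G \<omega>"
    and DA: "D \<subseteq> carrier G" "A \<subseteq> carrier G" "\<one> \<in> D" "\<one> \<in> A"
    and \<delta>_carrier: "\<And>x. x \<in> carrier G \<Longrightarrow> \<delta> x \<in> carrier G"
    and \<delta>_factor: "\<And>d a. d \<in> D \<Longrightarrow> a \<in> A \<Longrightarrow> \<delta> (d \<otimes> a) = d"
  shows "\<exists>\<psi>. cocycle2 G \<psi> \<and> cohomologous G \<omega> \<psi> \<and> (\<forall>d\<in>D. \<forall>a\<in>A. \<psi> d a = 1)"
proof -
  interpret group G by fact
  define c where "c = \<omega> \<one> \<one>"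
  have "cmod c = 1"
    using assms(2) unfolding c_def cocycle2_def by simp
  then have "c \<noteq> 0" by auto
  \<comment> \<open>\<open>\<mu> (d \<otimes> a) = \<omega> d a / c\<^sup>2\<close> on the factorization \<open>G = D A\<close> given by \<open>\<delta>\<close>\<close>
  define \<mu> where "\<mu> x = \<omega> (\<delta> x) (inv (\<delta> x) \<otimes> x) / c ^ 2" for x
  define \<psi> where "\<psi> x y = \<omega> x y * \<mu> x * \<mu> y / \<mu> (x \<otimes> y)" for x y
  have \<mu>_unit: "\<forall>x\<in>carrier G. cmod (\<mu> x) = 1"
    using assms(2) \<delta>_carrier \<open>cmod c = 1\<close>
    unfolding \<mu>_def cocycle2_def by (simp add: norm_divide norm_power)
  have "\<psi> d a = 1" if d: "d \<in> D" and a: "a \<in> A" for d a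
  proof -
    have dG: "d \<in> carrier G" and aG: "a \<in> carrier G" using d a DA by auto
    have \<mu>_d: "\<mu> d = 1 / c"
      using \<delta>_factor[OF d \<open>\<one> \<in> A\<close>] cocycle2_right_one[OF monoid_axioms assms(2) dG] dG
      by (simp add: \<mu>_def c_def power2_eq_square)
    have \<mu>_a: "\<mu> a = 1 / c"
      using \<delta>_factor[OF \<open>\<one> \<in> D\<close> a] cocycle2_left_one[OF monoid_axioms assms(2) aG] aG
      by (simp add: \<mu>_def c_def power2_eq_square)
    have \<mu>_da: "\<mu> (d \<otimes> a) = \<omega> d a / c ^ 2"
      using \<delta>_factor[OF d a] dG aG by (simp add: \<mu>_def flip: m_assoc)
    show ?thesis
      using cocycle2_nonzero[OF assms(2) dG aG] \<open>c \<noteq> 0\<close>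
      by (simp add: \<psi>_def \<mu>_d \<mu>_a \<mu>_da field_simps power2_eq_square)
  qed
  moreover have "cocycle2 G \<psi>"
    unfolding \<psi>_def by (rule cocycle2_coboundary_mult[OF monoid_axioms assms(2) \<mu>_unit])
  moreover have "cohomologous G \<omega> \<psi>"
    unfolding cohomologous_def \<psi>_def using \<mu>_unit by blast
  ultimately show ?thesis by blast
qed

definition twisted_diagonal :: "('a, 'b) monoid_scheme \<Rightarrow> 'a set \<Rightarrow> ('a \<times> 'a) monoid" where
  "twisted_diagonal K N =
     (K \<times>\<times> K)\<lparr>carrier := {(g \<otimes>\<^bsub>K\<^esub> n, g) | g n. g \<in> carrier K \<and> n \<in> N}\<rparr>"

lemma mult_twisted_diagonal [simp]:
  "(a, b) \<otimes>\<^bsub>twisted_diagonal K N\<^esub> (c, d) = (a \<otimes>\<^bsub>K\<^esub> c, b \<otimes>\<^bsub>K\<^esub> d)"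
  by (simp add: twisted_diagonal_def)

lemma one_twisted_diagonal [simp]: "\<one>\<^bsub>twisted_diagonal K N\<^esub> = (\<one>\<^bsub>K\<^esub>, \<one>\<^bsub>K\<^esub>)"
  by (simp add: twisted_diagonal_def)

lemma (in normal) twisted_diagonal_mem_iff:
  "(x, y) \<in> carrier (twisted_diagonal G H) \<longleftrightarrow> x \<in> carrier G \<and> y \<in> carrier G \<and> inv y \<otimes> x \<in> H"
proof
  assume "(x, y) \<in> carrier (twisted_diagonal G H)"
  then show "x \<in> carrier G \<and> y \<in> carrier G \<and> inv y \<otimes> x \<in> H"
    by (auto simp: twisted_diagonal_def simp flip: m_assoc)
next
  assume xy: "x \<in> carrier G \<and> y \<in> carrier G \<and> inv y \<otimes> x \<in> H"
  then have "x = y \<otimes> (inv y \<otimes> x)"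
    by (simp flip: m_assoc)
  with xy show "(x, y) \<in> carrier (twisted_diagonal G H)"
    unfolding twisted_diagonal_def by auto
qed

lemma (in normal) twisted_diagonal_diag: "g \<in> carrier G \<Longrightarrow> (g, g) \<in> carrier (twisted_diagonal G H)"
  by (simp add: twisted_diagonal_mem_iff)

lemma (in normal) twisted_diagonal_left: "n \<in> H \<Longrightarrow> (n, \<one>) \<in> carrier (twisted_diagonal G H)"
  by (simp add: twisted_diagonal_mem_iff)

lemma (in normal) twisted_diagonal_generator:
  "g \<in> carrier G \<Longrightarrow> n \<in> H \<Longrightarrow> (g \<otimes> n, g) \<in> carrier (twisted_diagonal G H)"
  by (simp add: twisted_diagonal_mem_iff flip: m_assoc)

lemma (in normal) subgroup_twisted_diagonal:
  "subgroup (carrier (twisted_diagonal G H)) (G \<times>\<times> G)"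
proof
  show "carrier (twisted_diagonal G H) \<subseteq> carrier (G \<times>\<times> G)"
    by (auto simp: twisted_diagonal_mem_iff)
  show "\<one>\<^bsub>G \<times>\<times> G\<^esub> \<in> carrier (twisted_diagonal G H)"
    by (simp add: twisted_diagonal_diag)
next
  fix p q assume "p \<in> carrier (twisted_diagonal G H)" "q \<in> carrier (twisted_diagonal G H)"
  then obtain a b c d where pq: "p = (a, b)" "q = (c, d)"
    and h: "a \<in> carrier G" "b \<in> carrier G" "inv b \<otimes> a \<in> H"
           "c \<in> carrier G" "d \<in> carrier G" "inv d \<otimes> c \<in> H"
    by (metis prod.collapse twisted_diagonal_mem_iff)
  have "inv (b \<otimes> d) \<otimes> (a \<otimes> c) = (inv d \<otimes> (inv b \<otimes> a) \<otimes> d) \<otimes> (inv d \<otimes> c)"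
    using h by (simp add: m_assoc inv_mult_group) (simp flip: m_assoc)
  also have "\<dots> \<in> H"
    using h by (simp add: inv_op_closed1)
  finally show "p \<otimes>\<^bsub>G \<times>\<times> G\<^esub> q \<in> carrier (twisted_diagonal G H)"
    using pq h by (simp add: twisted_diagonal_mem_iff)
next
  fix p assume "p \<in> carrier (twisted_diagonal G H)"
  then obtain a b where p: "p = (a, b)" and h: "a \<in> carrier G" "b \<in> carrier G" "inv b \<otimes> a \<in> H"
    by (metis prod.collapse twisted_diagonal_mem_iff)
  have "inv (inv b) \<otimes> inv a = b \<otimes> inv (inv b \<otimes> a) \<otimes> inv b"
    using h by (simp add: m_assoc inv_mult_group)
  also have "\<dots> \<in> H"
    using h by (simp add: inv_op_closed2)
  finally show "inv\<^bsub>G \<times>\<times> G\<^esub> p \<in> carrier (twisted_diagonal G H)"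
    using p h by (simp add: twisted_diagonal_mem_iff is_group)
qed

lemma (in normal) group_twisted_diagonal: "group (twisted_diagonal G H)"
proof -
  have "twisted_diagonal G H = (G \<times>\<times> G)\<lparr>carrier := carrier (twisted_diagonal G H)\<rparr>"
    by (simp add: twisted_diagonal_def)
  then show ?thesis
    using subgroup.subgroup_is_group[OF subgroup_twisted_diagonal DirProd_group[OF is_group is_group]]
    by simp
qed

lemma (in normal) inv_twisted_diagonal:
  assumes "(a, b) \<in> carrier (twisted_diagonal G H)"
  shows "inv\<^bsub>twisted_diagonal G H\<^esub> (a, b) = (inv a, inv b)"
proof -
  have "(a, b) \<in> carrier (G \<times>\<times> G)"
    using assms by (simp add: twisted_diagonal_mem_iff)
  then show ?thesis
    using group.m_inv_consistent[OF DirProd_group[OF is_group is_group] subgroup_twisted_diagonal assms]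
    by (simp add: twisted_diagonal_def is_group)
qed

lemma (in normal) beta_twisted_diagonal:
  assumes "k \<in> carrier G" "n \<in> H"
    and "\<psi> (k, k) (inv k \<otimes> n \<otimes> k, \<one>) = 1"
  shows "beta (twisted_diagonal G H) \<psi> (k, k) (n, \<one>) = cnj (\<psi> (n, \<one>) (k, k))"
  using assms by (simp add: beta_def inv_twisted_diagonal twisted_diagonal_diag)

lemma (in normal) twisted_diagonal_cocycle_normalization:
  assumes "cocycle2 (twisted_diagonal G H) \<omega>"
  shows "\<exists>\<psi>. cocycle2 (twisted_diagonal G H) \<psi> \<and> cohomologous (twisted_diagonal G H) \<omega> \<psi> \<and>
           (\<forall>g\<in>carrier G. \<forall>n\<in>H. \<psi> (g, g) (n, \<one>) = 1)"
proof -
  have "\<exists>\<psi>. cocycle2 (twisted_diagonal G H) \<psi> \<and> cohomologous (twisted_diagonal G H) \<omega> \<psi> \<and>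
      (\<forall>d\<in>{(g, g) | g. g \<in> carrier G}. \<forall>a\<in>{(n, \<one>) | n. n \<in> H}. \<psi> d a = 1)"
    by (rule cocycle2_cohomologous_trivial_on_factorization[OF group_twisted_diagonal assms,
          where \<delta> = "\<lambda>(x, y). (y, y)"])
      (auto simp: twisted_diagonal_mem_iff)
  then show ?thesis by blast
qed

lemma (in normal) twisted_diagonal_normalized_cocycle_eq:
  assumes \<psi>: "cocycle2 (twisted_diagonal G H) \<psi>"
    and normalized: "\<forall>g\<in>carrier G. \<forall>n\<in>H. \<psi> (g, g) (n, \<one>) = 1"
    and g: "g \<in> carrier G" and k: "k \<in> carrier G" and n: "n \<in> H" and m: "m \<in> H"
  shows "\<psi> (g \<otimes> n, g) (k \<otimes> m, k)
           = cnj (beta (twisted_diagonal G H) \<psi> (k, k) (n, \<one>))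
             * \<psi> (inv k \<otimes> n \<otimes> k, \<one>) (m, \<one>) * \<psi> (g, g) (k, k)"
proof -
  note law = cocycle2_assoc[OF \<psi>]
  have trivial: "\<psi> (x, x) (y, \<one>) = 1" if "x \<in> carrier G" "y \<in> H" for x y
    using normalized that by blast
  define n' where "n' = inv k \<otimes> n \<otimes> k"
  have n': "n' \<in> H" "n' \<otimes> m \<in> H"
    using k n m by (simp_all add: n'_def inv_op_closed1)
  have nk: "n \<otimes> k = k \<otimes> n'"
    using k n by (simp add: n'_def flip: m_assoc)
  have nkm: "n \<otimes> (k \<otimes> m) = k \<otimes> (n' \<otimes> m)"
    using k n m n' by (simp add: nk flip: m_assoc)
  have split: "\<psi> (g \<otimes> n, g) (k \<otimes> m, k) = \<psi> (g, g) (n \<otimes> (k \<otimes> m), k) * \<psi> (n, \<one>) (k \<otimes> m, k)"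
    using law[OF twisted_diagonal_diag[OF g] twisted_diagonal_left[OF n]
        twisted_diagonal_generator[OF k m]] trivial[OF g n] g k n m
    by (simp add: m_assoc)
  have diag_part: "\<psi> (g, g) (n \<otimes> (k \<otimes> m), k) = \<psi> (g, g) (k, k)"
    using law[OF twisted_diagonal_diag[OF g] twisted_diagonal_diag[OF k]
        twisted_diagonal_left[OF n'(2)]] trivial g k n'
    by (simp add: nkm)
  have normal_part: "\<psi> (n, \<one>) (k \<otimes> m, k) = \<psi> (n, \<one>) (k, k) * \<psi> (n \<otimes> k, k) (m, \<one>)"
    using law[OF twisted_diagonal_left[OF n] twisted_diagonal_diag[OF k]
        twisted_diagonal_left[OF m]] trivial[OF k m] k n m
    by simp
  have conjugate_part: "\<psi> (n \<otimes> k, k) (m, \<one>) = \<psi> (n', \<one>) (m, \<one>)"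
    using law[OF twisted_diagonal_diag[OF k] twisted_diagonal_left[OF n'(1)]
        twisted_diagonal_left[OF m]] trivial k n' m
    by (simp add: nk)
  have "cnj (beta (twisted_diagonal G H) \<psi> (k, k) (n, \<one>)) = \<psi> (n, \<one>) (k, k)"
    using beta_twisted_diagonal[where \<psi> = \<psi>, OF k n] trivial[OF k n'(1)]
    by (simp add: n'_def)
  then show ?thesis
    unfolding split diag_part normal_part conjugate_part n'_def by (simp add: mult_ac)
qed

theorem claim2:
  fixes K :: "('a, 'b) monoid_scheme" and N :: "'a set" and H :: "('a \<times> 'a) monoid"
  assumes "group K" and "finite (carrier K)" and "N \<lhd> K"
  defines "H \<equiv> (K \<times>\<times> K)\<lparr>carrier := {(g \<otimes>\<^bsub>K\<^esub> n, g) | g n. g \<in> carrier K \<and> n \<in> N}\<rparr>"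
  shows "\<forall>\<omega>. cocycle2 H \<omega> \<longrightarrow>
           (\<exists>\<psi>. cocycle2 H \<psi> \<and> cohomologous H \<omega> \<psi> \<and>
              (\<forall>g\<in>carrier K. \<forall>k\<in>carrier K. \<forall>n\<in>N. \<forall>m\<in>N.
                 \<psi> (g \<otimes>\<^bsub>K\<^esub> n, g) (k \<otimes>\<^bsub>K\<^esub> m, k)
                 = cnj (beta H \<psi> (k, k) (n, \<one>\<^bsub>K\<^esub>))
                   * \<psi> (inv\<^bsub>K\<^esub> k \<otimes>\<^bsub>K\<^esub> n \<otimes>\<^bsub>K\<^esub> k, \<one>\<^bsub>K\<^esub>) (m, \<one>\<^bsub>K\<^esub>)
                   * \<psi> (g, g) (k, k)))"
proof (intro allI impI)
  interpret normal N K by (rule assms(3))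
  have H: "H = twisted_diagonal K N"
    by (simp add: H_def twisted_diagonal_def)
  fix \<omega> assume "cocycle2 H \<omega>"
  then obtain \<psi> where \<psi>: "cocycle2 H \<psi>" "cohomologous H \<omega> \<psi>"
    and normalized: "\<forall>g\<in>carrier K. \<forall>n\<in>N. \<psi> (g, g) (n, \<one>\<^bsub>K\<^esub>) = 1"
    unfolding H using twisted_diagonal_cocycle_normalization by blast
  show "\<exists>\<psi>. cocycle2 H \<psi> \<and> cohomologous H \<omega> \<psi> \<and>
      (\<forall>g\<in>carrier K. \<forall>k\<in>carrier K. \<forall>n\<in>N. \<forall>m\<in>N.
         \<psi> (g \<otimes>\<^bsub>K\<^esub> n, g) (k \<otimes>\<^bsub>K\<^esub> m, k)
         = cnj (beta H \<psi> (k, k) (n, \<one>\<^bsub>K\<^esub>))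
           * \<psi> (inv\<^bsub>K\<^esub> k \<otimes>\<^bsub>K\<^esub> n \<otimes>\<^bsub>K\<^esub> k, \<one>\<^bsub>K\<^esub>) (m, \<one>\<^bsub>K\<^esub>) * \<psi> (g, g) (k, k))"
    using twisted_diagonal_normalized_cocycle_eq[OF \<psi>(1)[unfolded H] normalized, folded H]
    by (intro exI[of _ \<psi>] conjI ballI \<psi>) auto
qed

end
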